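(* Let $G=(G_t)_{t\in\mathbb{Z}^N}$ be an $\mathbb{R}^n$-valued stationary increment field. Assume that for some $\delta>0$, $$\mathbb{E}\Big(\ln\|\Delta_{\mathbf 1}G\|\,\mathbb{1}_{\{\|\Delta_{\mathbf 1}G\|>1\}}\Big)^{N+\delta}<\infty,$$ where $\mathbf 1=(1,\dots,1)$ and $\|\cdot\|$ is the Euclidean norm. Then for every $N$-tuple $\Theta$ of pairwise commuting symmetric positive definite $n\times n$ matrices and every $t\in\mathbb{Z}^N$, the iterated limit $$\lim_{M_1\to\infty}\cdots\lim_{M_N\to\infty}\sum_{j_1=-M_1}^{t_1}\cdots\sum_{j_N=-M_N}^{t_N}e^{j\ast\Theta}\Delta_jG$$ converges almost surely (indeed the series is almost surely absolutely convergent); in particular $G\in\mathcal{G}_\Theta$. Moreover, if $G_t=0$ almost surely whenever $t_l=0$ for some $l\in\{1,\dots,N\}$, then the same conclusion holds with $\|\Delta_{\mathbf 1}G\|$ replaced by $\|G_{\mathbf 1}\|=\|G_{1,\dots,1}\|$ in the moment condition, and in this case $G\in\mathcal{G}_{\Theta,0}$ for all such $\Theta$.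
   Context: For $t\in\mathbb{Z}^N$ and an $N$-tuple $\Theta=(\Theta_1,\dots,\Theta_N)$ of $n\times n$ matrices, $t\ast\Theta=\sum_{j=1}^N t_j\Theta_j$. For a field $Z=(Z_t)_{t\in\mathbb{Z}^N}$, the unit cube increment is $\Delta_t Z=\sum_{i\in\{0,1\}^N}(-1)^{i_1+\dots+i_N}Z_{t_1-i_1,\dots,t_N-i_N}$. Equality in law of fields means equality of all finite-dimensional distributions. A field $G$ is a stationary increment field if $(\Delta_{t+s}G)_{t\in\mathbb{Z}^N}$ and $(\Delta_tG)_{t\in\mathbb{Z}^N}$ are equal in law for every $s\in\mathbb{Z}^N$. For $\Theta$ an $N$-tuple of pairwise commuting symmetric positive definite matrices, $\mathcal{G}_\Theta$ is the class of stationary increment fields $G$ such that $\lim_{M_1\to\infty}\cdots\lim_{M_N\to\infty}\sum_{j_1=-M_1}^{t_1}\cdots\sum_{j_N=-M_N}^{t_N}e^{j\ast\Theta}\Delta_jG$ converges in probability for every $t\in\mathbb{Z}^N$; $\mathcal{G}_{\Theta,0}$ is the subclass of $G\in\mathcal{G}_\Theta$ with $G_t=0$ a.s. whenever $t_l=0$ for some $l$. *)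

theory Defs
  imports "HOL-Analysis.Analysis" "HOL-Probability.Probability"
begin

text \<open>Lattice points in Z^N are functions from a finite index type 'd (with CARD('d) = N) to int.\<close>

definition cube_incr :: "(('d::finite \<Rightarrow> int) \<Rightarrow> 'v::real_vector) \<Rightarrow> ('d \<Rightarrow> int) \<Rightarrow> 'v" where
  "cube_incr Z t = (\<Sum>S\<in>Pow (UNIV::'d set).
      ((-1::real) ^ card S) *\<^sub>R Z (\<lambda>l. t l - (if l \<in> S then 1 else 0)))"

definition stationary_increment ::
  "'a measure \<Rightarrow> (('d::finite \<Rightarrow> int) \<Rightarrow> 'a \<Rightarrow> real^'n) \<Rightarrow> bool" where
  "stationary_increment M G \<longleftrightarrow>
     (\<forall>s S. finite S \<longrightarrow>
        distr M (PiM S (\<lambda>_. borel)) (\<lambda>\<omega>. \<lambda>t\<in>S. cube_incr (\<lambda>u. G u \<omega>) (\<lambda>l. t l + s l))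
      = distr M (PiM S (\<lambda>_. borel)) (\<lambda>\<omega>. \<lambda>t\<in>S. cube_incr (\<lambda>u. G u \<omega>) t))"

primrec mat_pow :: "real^'n^'n \<Rightarrow> nat \<Rightarrow> real^'n^'n" where
  "mat_pow A 0 = mat 1"
| "mat_pow A (Suc k) = A ** mat_pow A k"

definition mat_exp :: "real^'n^'n \<Rightarrow> real^'n^'n" where
  "mat_exp A = (\<Sum>k. (1 / fact k) *\<^sub>R mat_pow A k)"

definition sym_pos_def_mat :: "real^'n^'n \<Rightarrow> bool" where
  "sym_pos_def_mat A \<longleftrightarrow> transpose A = A \<and> (\<forall>x. x \<noteq> 0 \<longrightarrow> x \<bullet> (A *v x) > 0)"

definition admissible_Theta :: "('d \<Rightarrow> real^'n^'n) \<Rightarrow> bool" where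
  "admissible_Theta \<Theta> \<longleftrightarrow> (\<forall>l. sym_pos_def_mat (\<Theta> l)) \<and> (\<forall>l m. \<Theta> l ** \<Theta> m = \<Theta> m ** \<Theta> l)"

definition star_Theta :: "('d::finite \<Rightarrow> int) \<Rightarrow> ('d \<Rightarrow> real^'n^'n) \<Rightarrow> real^'n^'n" where
  "star_Theta j \<Theta> = (\<Sum>l\<in>UNIV. of_int (j l) *\<^sub>R \<Theta> l)"

definition box_sum ::
  "('d::finite \<Rightarrow> real^'n^'n) \<Rightarrow> (('d \<Rightarrow> int) \<Rightarrow> real^'n) \<Rightarrow> ('d \<Rightarrow> int) \<Rightarrow> ('d \<Rightarrow> nat) \<Rightarrow> real^'n" where
  "box_sum \<Theta> Z t Mv = (\<Sum>j\<in>{j. \<forall>l. - int (Mv l) \<le> j l \<and> j l \<le> t l}.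
       mat_exp (star_Theta j \<Theta>) *v cube_incr Z j)"

text \<open>Iterated limits: for a coordinate list [d1,...,dk], the limit in d1 is outermost
  and the limit in dk innermost.\<close>
fun ilim :: "'d list \<Rightarrow> (('d \<Rightarrow> nat) \<Rightarrow> 'b::t2_space) \<Rightarrow> ('d \<Rightarrow> nat) \<Rightarrow> 'b" where
  "ilim [] F = F"
| "ilim (d # ds) F = (\<lambda>Mv. lim (\<lambda>m. ilim ds F (Mv(d := m))))"

fun iconv :: "'d list \<Rightarrow> (('d \<Rightarrow> nat) \<Rightarrow> 'b::t2_space) \<Rightarrow> bool" where
  "iconv [] F = True"
| "iconv (d # ds) F = (iconv ds F \<and> (\<forall>Mv. convergent (\<lambda>m. ilim ds F (Mv(d := m)))))"

definition coords :: "('d::{finite,linorder}) list" where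
  "coords = sorted_list_of_set UNIV"

definition as_conclusion :: "'a measure \<Rightarrow> (('d::{finite,linorder} \<Rightarrow> int) \<Rightarrow> 'a \<Rightarrow> real^'n) \<Rightarrow> bool" where
  "as_conclusion M G \<longleftrightarrow>
    (\<forall>\<Theta> t. admissible_Theta \<Theta> \<longrightarrow>
      (AE \<omega> in M. iconv coords (box_sum \<Theta> (\<lambda>u. G u \<omega>) t)
          \<and> (\<lambda>j. norm (mat_exp (star_Theta j \<Theta>) *v cube_incr (\<lambda>u. G u \<omega>) j))
                summable_on {j. \<forall>l. j l \<le> t l}))"

definition log_moment :: "'a measure \<Rightarrow> ('a \<Rightarrow> real^'n) \<Rightarrow> real \<Rightarrow> real \<Rightarrow> bool" where
  "log_moment M X p \<delta> \<longleftrightarrow>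
     (\<integral>\<^sup>+ \<omega>. ennreal ((if norm (X \<omega>) > 1 then ln (norm (X \<omega>)) else 0) powr (p + \<delta>)) \<partial>M) < \<infinity>"

end

theory Submission
  imports Defs
begin

text \<open>
  Since the \<open>\<Theta>\<^sub>l\<close> are positive definite, \<open>j \<star> \<Theta>\<close> has a quadratic form
  bounded by \<open>(C - \<alpha> \<Sum>\<^sub>l (t\<^sub>l - j\<^sub>l)) \<parallel>x\<parallel>\<^sup>2\<close> on the octant \<open>j \<le> t\<close>, so a Gronwall
  argument gives \<open>\<parallel>e\<^bsup>j\<star>\<Theta>\<^esup> x\<parallel> \<le> e\<^bsup>C - \<alpha> |t - j|\<^esup> \<parallel>x\<parallel>\<close>: the weights decay exponentially
  in \<open>|t - j|\<close>. By stationarity every \<open>\<Delta>\<^sub>jG\<close> has the law of \<open>\<Delta>\<^sub>1G\<close>, and Markov's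
  inequality for \<open>(ln\<^sup>+ \<parallel>\<Delta>\<^sub>1G\<parallel>)\<^bsup>N+\<delta>\<^esup>\<close> bounds \<open>P(\<parallel>\<Delta>\<^sub>jG\<parallel> > e\<^bsup>\<alpha>|t-j|/2\<^esup>)\<close> by a
  constant times \<open>\<Prod>\<^sub>l (1 + t\<^sub>l - j\<^sub>l)\<^bsup>-(N+\<delta>)/N\<^esup>\<close>, which is summable over \<open>\<int>\<^sup>N\<close>.
  By Borel--Cantelli almost surely only finitely many increments exceed this
  threshold, so the series is absolutely summable, and every iterated limit of box
  sums of an absolutely summable family equals its sum. If \<open>G\<close> vanishes on the
  coordinate hyperplanes, then \<open>\<Delta>\<^sub>1G = G\<^sub>1\<close> almost surely.
\<close>

subsection \<open>The matrix exponential as an exponential in a Banach algebra\<close>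

text \<open>\<open>real^'n^'n\<close> carries the componentwise ring structure, so the composition algebra,
  in which \<open>exp\<close> is the matrix exponential, needs a type of its own.\<close>

typedef (overloaded) ('n::finite) endo = "UNIV :: ((real^'n) \<Rightarrow>\<^sub>L (real^'n)) set"
  morphisms eop Eop by auto

setup_lifting type_definition_endo

instantiation endo :: (finite) real_normed_vector
begin
lift_definition norm_endo :: "'a endo \<Rightarrow> real" is norm .
lift_definition minus_endo :: "'a endo \<Rightarrow> 'a endo \<Rightarrow> 'a endo" is "(-)" .
lift_definition plus_endo :: "'a endo \<Rightarrow> 'a endo \<Rightarrow> 'a endo" is "(+)" .
lift_definition uminus_endo :: "'a endo \<Rightarrow> 'a endo" is "uminus" .
lift_definition zero_endo :: "'a endo" is 0 .
lift_definition scaleR_endo :: "real \<Rightarrow> 'a endo \<Rightarrow> 'a endo" is "scaleR" .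
definition dist_endo :: "'a endo \<Rightarrow> 'a endo \<Rightarrow> real" where "dist_endo a b = norm (a - b)"
definition uniformity_endo :: "('a endo \<times> 'a endo) filter"
  where "uniformity_endo = (INF e\<in>{0 <..}. principal {(x, y). dist x y < e})"
definition open_endo :: "'a endo set \<Rightarrow> bool"
  where "open_endo S = (\<forall>x\<in>S. \<forall>\<^sub>F (x', y) in uniformity. x' = x \<longrightarrow> y \<in> S)"
definition sgn_endo :: "'a endo \<Rightarrow> 'a endo" where "sgn_endo x = scaleR (inverse (norm x)) x"
instance
  apply standard
  unfolding dist_endo_def open_endo_def sgn_endo_def uniformity_endo_def
  apply (rule refl | (transfer, force simp: norm_triangle_ineq algebra_simps))+
  done
end

instantiation endo :: (finite) real_normed_algebra_1
begin
lift_definition times_endo :: "'a endo \<Rightarrow> 'a endo \<Rightarrow> 'a endo" is "blinfun_compose" .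
lift_definition one_endo :: "'a endo" is id_blinfun .
instance
proof
  show "0 \<noteq> (1::'a endo)"
  proof
    assume "0 = (1::'a endo)"
    hence "blinfun_apply (eop 0) (axis undefined 1) = blinfun_apply (eop 1) (axis undefined 1)"
      by simp
    thus False by (simp add: zero_endo.rep_eq one_endo.rep_eq axis_eq_0_iff)
  qed
qed (transfer; auto intro!: blinfun_eqI simp: blinfun.bilinear_simps norm_blinfun_compose)+
end

lemma norm_eop: "norm (eop T) = norm T"
  by transfer simp

instance endo :: (finite) banach
proof
  fix X :: "nat \<Rightarrow> 'a endo"
  assume "Cauchy X"
  hence "Cauchy (\<lambda>n. eop (X n))"
    by (simp add: Cauchy_def dist_norm dist_endo_def norm_eop[symmetric] minus_endo.rep_eq)
  then obtain L where L: "(\<lambda>n. eop (X n)) \<longlonglongrightarrow> L"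
    using Cauchy_convergent_iff convergent_def by blast
  have "norm (X n - Eop L) = norm (eop (X n) - L)" for n
    by (simp add: minus_endo.rep_eq norm_endo.rep_eq Eop_inverse)
  hence "X \<longlonglongrightarrow> Eop L"
    using L by (simp add: LIMSEQ_iff)
  thus "convergent X" by (auto simp: convergent_def)
qed

definition endo_of_matrix :: "real^'n^'n \<Rightarrow> 'n::finite endo" where
  "endo_of_matrix A = Eop (Blinfun (\<lambda>x. A *v x))"

definition matrix_of_endo :: "'n::finite endo \<Rightarrow> real^'n^'n" where
  "matrix_of_endo T = matrix (blinfun_apply (eop T))"

lemma eop_endo_of_matrix [simp]: "blinfun_apply (eop (endo_of_matrix A)) x = A *v x"
  by (simp add: endo_of_matrix_def Eop_inverse bounded_linear_Blinfun_apply)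

lemma eop_times [simp]: "blinfun_apply (eop (S * T)) x = blinfun_apply (eop S) (blinfun_apply (eop T) x)"
  by (simp add: times_endo.rep_eq)

lemma eop_one [simp]: "blinfun_apply (eop (1::'n::finite endo)) x = x"
  by (simp add: one_endo.rep_eq)

lemma endo_eqI: "(\<And>x. blinfun_apply (eop S) x = blinfun_apply (eop T) x) \<Longrightarrow> S = T"
  by (metis blinfun_eqI eop_inject)

lemma endo_of_matrix_power: "endo_of_matrix A ^ k = endo_of_matrix (mat_pow A k)"
  by (induction k) (auto intro!: endo_eqI simp: matrix_vector_mul_assoc)

lemma matrix_of_endo_of_matrix [simp]: "matrix_of_endo (endo_of_matrix A) = A"
  by (simp add: matrix_of_endo_def endo_of_matrix_def Eop_inverse bounded_linear_Blinfun_apply)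

lemma matrix_of_endo_mult_vec: "matrix_of_endo T *v x = blinfun_apply (eop T) x"
  unfolding matrix_of_endo_def
  using bounded_linear.linear[OF blinfun.bounded_linear_right[of "eop T"]]
  by (intro matrix_works)
    (simp add: linear_def module_hom_def module_hom_axioms_def Real_Vector_Spaces.linear_def
      scalar_mult_eq_scaleR)

lemma bounded_linear_eop_apply: "bounded_linear (\<lambda>T::'n::finite endo. blinfun_apply (eop T) x)"
proof (rule bounded_linear_intro[where K="norm x"])
  fix S T :: "'n endo" and r :: real
  show "blinfun_apply (eop (S + T)) x = blinfun_apply (eop S) x + blinfun_apply (eop T) x"
    by (simp add: plus_endo.rep_eq blinfun.add_left)
  show "blinfun_apply (eop (r *\<^sub>R T)) x = r *\<^sub>R blinfun_apply (eop T) x"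
    by (simp add: scaleR_endo.rep_eq blinfun.scaleR_left)
  show "norm (blinfun_apply (eop T) x) \<le> norm T * norm x"
    using norm_blinfun[of "eop T" x] by (simp add: norm_eop)
qed

lemma bounded_linear_matrix_of_endo: "bounded_linear (matrix_of_endo :: 'n::finite endo \<Rightarrow> _)"
proof (rule bounded_linear_intro[where K="real CARD('n) * real CARD('n)"])
  fix S T :: "'n endo" and r :: real
  show "matrix_of_endo (S + T) = matrix_of_endo S + matrix_of_endo T"
    by (simp add: matrix_of_endo_def matrix_def plus_endo.rep_eq blinfun.add_left vec_eq_iff)
  show "matrix_of_endo (r *\<^sub>R T) = r *\<^sub>R matrix_of_endo T"
    by (simp add: matrix_of_endo_def matrix_def scaleR_endo.rep_eq vec_eq_iff blinfun.scaleR_left)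
  have entry: "\<bar>matrix_of_endo T $ i $ j\<bar> \<le> norm T" for i j
  proof -
    have "\<bar>matrix_of_endo T $ i $ j\<bar> = \<bar>blinfun_apply (eop T) (axis j 1) $ i\<bar>"
      by (simp add: matrix_of_endo_def matrix_def)
    also have "\<dots> \<le> norm (blinfun_apply (eop T) (axis j 1))" by (rule component_le_norm_cart)
    also have "\<dots> \<le> norm (eop T) * norm (axis j (1::real))" by (rule norm_blinfun)
    finally show ?thesis by (simp add: norm_eop)
  qed
  have "norm (matrix_of_endo T) \<le> (\<Sum>i\<in>UNIV. norm (matrix_of_endo T $ i))"
    by (simp add: norm_vec_def L2_set_le_sum)
  also have "\<dots> \<le> (\<Sum>i\<in>(UNIV::'n set). \<Sum>j\<in>(UNIV::'n set). \<bar>matrix_of_endo T $ i $ j\<bar>)"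
    by (intro sum_mono norm_le_l1_cart)
  also have "\<dots> \<le> (\<Sum>i\<in>(UNIV::'n set). \<Sum>j\<in>(UNIV::'n set). norm T)"
    by (intro sum_mono entry)
  finally show "norm (matrix_of_endo T) \<le> norm T * (real CARD('n) * real CARD('n))"
    by (simp add: algebra_simps)
qed

lemma mat_exp_eq_exp: "mat_exp A = matrix_of_endo (exp (endo_of_matrix A))"
proof -
  have "(\<lambda>k. endo_of_matrix A ^ k /\<^sub>R fact k) sums exp (endo_of_matrix A)"
    unfolding exp_def by (rule summable_sums[OF summable_exp_generic])
  from bounded_linear.sums[OF bounded_linear_matrix_of_endo this]
  have "(\<lambda>k. (1 / fact k) *\<^sub>R mat_pow A k) sums matrix_of_endo (exp (endo_of_matrix A))"
    by (simp add: linear_scale[OF bounded_linear.linear[OF bounded_linear_matrix_of_endo]]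
        endo_of_matrix_power divide_inverse_commute)
  thus ?thesis unfolding mat_exp_def by (rule sums_unique[symmetric])
qed

lemma mat_exp_mult_vec: "mat_exp A *v x = blinfun_apply (eop (exp (endo_of_matrix A))) x"
  by (simp add: mat_exp_eq_exp matrix_of_endo_mult_vec)

lemma endo_of_matrix_zero [simp]: "endo_of_matrix 0 = 0"
  by (rule endo_eqI) (simp add: zero_endo.rep_eq)

lemma endo_of_matrix_scaleR: "endo_of_matrix (s *\<^sub>R A) = s *\<^sub>R endo_of_matrix A"
  by (rule endo_eqI) (simp add: scaleR_endo.rep_eq blinfun.scaleR_left scaleR_matrix_vector_assoc)

lemma has_vector_derivative_mat_exp_orbit:
  "((\<lambda>s. mat_exp (s *\<^sub>R A) *v x) has_vector_derivative A *v (mat_exp (s *\<^sub>R A) *v x)) (at s)"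
proof -
  let ?T = "endo_of_matrix A"
  have "((\<lambda>s. blinfun_apply (eop (exp (s *\<^sub>R ?T))) x) has_vector_derivative
          blinfun_apply (eop (exp (s *\<^sub>R ?T) * ?T)) x) (at s)"
    by (rule bounded_linear.has_vector_derivative[OF bounded_linear_eop_apply
          exp_scaleR_has_vector_derivative_right])
  thus ?thesis
    by (simp only: mat_exp_mult_vec endo_of_matrix_scaleR exp_times_scaleR_commute eop_times eop_endo_of_matrix)
qed

text \<open>Gronwall: \<open>s \<mapsto> e\<^bsup>-2\<mu>s\<^esup> \<parallel>e\<^bsup>sA\<^esup>x\<parallel>\<^sup>2\<close> has nonpositive derivative.\<close>

lemma norm_mat_exp_mult_vec_le:
  fixes A :: "real^'n::finite^'n"
  assumes quad: "\<And>y. y \<bullet> (A *v y) \<le> \<mu> * (y \<bullet> y)"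
  shows "norm (mat_exp A *v x) \<le> exp \<mu> * norm x"
proof -
  define y where "y s = mat_exp (s *\<^sub>R A) *v x" for s
  define h where "h s = exp (-2 * \<mu> * s) * (y s \<bullet> y s)" for s
  have dy: "(y has_vector_derivative A *v y s) (at s)" for s
    unfolding y_def by (rule has_vector_derivative_mat_exp_orbit)
  have "h 1 \<le> h 0"
  proof (rule DERIV_nonpos_imp_nonincreasing[of 0 1 h])
    fix s :: real
    have "(h has_real_derivative
        exp (-2 * \<mu> * s) * (2 * (y s \<bullet> (A *v y s)) - 2 * \<mu> * (y s \<bullet> y s))) (at s)"
    proof -
      have "((\<lambda>s. y s \<bullet> y s) has_vector_derivative (y s \<bullet> (A *v y s) + (A *v y s) \<bullet> y s)) (at s)"
        by (rule bounded_bilinear.has_vector_derivative[OF bounded_bilinear_inner dy dy])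
      hence "((\<lambda>s. y s \<bullet> y s) has_real_derivative 2 * (y s \<bullet> (A *v y s))) (at s)"
        by (simp add: has_real_derivative_iff_has_vector_derivative inner_commute)
      thus ?thesis
        unfolding h_def by (auto intro!: derivative_eq_intros simp: algebra_simps)
    qed
    moreover have "exp (-2 * \<mu> * s) * (2 * (y s \<bullet> (A *v y s)) - 2 * \<mu> * (y s \<bullet> y s)) \<le> 0"
      using quad[of "y s"] by (simp add: mult_nonneg_nonpos)
    ultimately show "\<exists>d. (h has_real_derivative d) (at s) \<and> d \<le> 0" by blast
  qed simp
  moreover have "h 0 = norm x ^ 2"
    by (simp add: h_def y_def mat_exp_mult_vec endo_of_matrix_scaleR power2_norm_eq_inner)
  moreover have "h 1 = exp (-2 * \<mu>) * norm (mat_exp A *v x) ^ 2"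
    by (simp add: h_def y_def power2_norm_eq_inner)
  ultimately have "norm (mat_exp A *v x) ^ 2 \<le> exp (2 * \<mu>) * norm x ^ 2"
    by (simp add: exp_minus field_simps)
  also have "\<dots> = (exp \<mu> * norm x) ^ 2"
    by (simp add: power_mult_distrib power2_eq_square mult_exp_exp)
  finally show ?thesis
    by (rule power2_le_imp_le) simp
qed

subsection \<open>Exponential decay of the weights \<open>e\<^bsup>j\<star>\<Theta>\<^esup>\<close>\<close>

lemma sym_pos_def_mat_coercive:
  fixes B :: "real^'n::finite^'n"
  assumes "sym_pos_def_mat B"
  shows "\<exists>c>0. \<forall>x. c * (x \<bullet> x) \<le> x \<bullet> (B *v x)"
proof -
  have cont: "continuous_on (sphere 0 1) (\<lambda>x::real^'n. x \<bullet> (B *v x))"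
    by (intro continuous_intros linear_continuous_on) (simp add: bounded_linear.linear)
  have "axis undefined 1 \<in> sphere (0::real^'n) 1" by simp
  then obtain u where u: "u \<in> sphere 0 1"
    and umin: "\<And>x. x \<in> sphere 0 1 \<Longrightarrow> u \<bullet> (B *v u) \<le> x \<bullet> (B *v x)"
    using continuous_attains_inf[OF compact_sphere _ cont] by blast
  define c where "c = u \<bullet> (B *v u)"
  have "u \<noteq> 0" using u by auto
  with assms have "c > 0" by (simp add: c_def sym_pos_def_mat_def)
  moreover have "c * (x \<bullet> x) \<le> x \<bullet> (B *v x)" for x
  proof (cases "x = 0")
    case False
    have "c \<le> ((1 / norm x) *\<^sub>R x) \<bullet> (B *v ((1 / norm x) *\<^sub>R x))"
      unfolding c_def by (rule umin) (use False in simp)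
    also have "\<dots> = (x \<bullet> (B *v x)) / norm x ^ 2"
      by (simp add: matrix_vector_mult_scaleR power2_eq_square)
    finally show ?thesis
      using False by (simp add: field_simps power2_norm_eq_inner)
  qed simp
  ultimately show ?thesis by blast
qed

lemma quadratic_form_le_norm_sq:
  fixes B :: "real^'n::finite^'n"
  shows "\<exists>K\<ge>0. \<forall>x. x \<bullet> (B *v x) \<le> K * (x \<bullet> x)"
proof -
  obtain K where K: "K > 0" "\<And>x. norm (B *v x) \<le> norm x * K"
    using bounded_linear.pos_bounded[OF matrix_vector_mul_bounded_linear[of B]] by blast
  have "x \<bullet> (B *v x) \<le> K * (x \<bullet> x)" for x
  proof -
    have "x \<bullet> (B *v x) \<le> norm x * norm (B *v x)" by (rule norm_cauchy_schwarz)
    also have "\<dots> \<le> norm x * (norm x * K)" by (intro mult_left_mono K) auto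
    finally show ?thesis by (simp add: power2_norm_eq_inner[symmetric] power2_eq_square algebra_simps)
  qed
  thus ?thesis using K by (intro exI[of _ K]) auto
qed

lemma inner_star_Theta_mult_vec:
  "y \<bullet> (star_Theta j \<Theta> *v y) = (\<Sum>l\<in>UNIV. of_int (j l) * (y \<bullet> (\<Theta> l *v y)))"
proof -
  have "star_Theta j \<Theta> *v y = (\<Sum>l\<in>UNIV. of_int (j l) *\<^sub>R (\<Theta> l *v y))"
    unfolding star_Theta_def
    by (induction rule: infinite_finite_induct)
      (simp_all add: matrix_vector_mult_add_rdistrib scaleR_matrix_vector_assoc)
  thus ?thesis by (simp add: inner_sum_right)
qed

text \<open>On the octant \<open>j = t - k\<close>, \<open>k \<in> \<nat>\<^sup>N\<close>, the positive-definite part \<open>-k \<star> \<Theta>\<close>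
  contributes the decay and \<open>t \<star> \<Theta>\<close> only a constant.\<close>

lemma inner_star_Theta_shift_le:
  fixes \<Theta> :: "'d::finite \<Rightarrow> real^'n::finite^'n"
  assumes lower: "\<And>l x. \<alpha> * (x \<bullet> x) \<le> x \<bullet> (\<Theta> l *v x)" and upper: "\<And>l x. x \<bullet> (\<Theta> l *v x) \<le> K l * (x \<bullet> x)"
    and "\<alpha> \<ge> 0"
  shows "y \<bullet> (star_Theta (\<lambda>l. t l - int (k l)) \<Theta> *v y)
    \<le> ((\<Sum>l\<in>UNIV. \<bar>real_of_int (t l)\<bar> * K l) - \<alpha> * (\<Sum>l\<in>UNIV. real (k l))) * (y \<bullet> y)"
proof -
  have summand: "real_of_int (t l - int (k l)) * (y \<bullet> (\<Theta> l *v y))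
      \<le> \<bar>real_of_int (t l)\<bar> * K l * (y \<bullet> y) - \<alpha> * real (k l) * (y \<bullet> y)" for l
  proof -
    have "0 \<le> y \<bullet> (\<Theta> l *v y)"
      using lower[where l=l and x=y] \<open>\<alpha> \<ge> 0\<close> by (meson inner_ge_zero mult_nonneg_nonneg order_trans)
    hence "real_of_int (t l) * (y \<bullet> (\<Theta> l *v y)) \<le> \<bar>real_of_int (t l)\<bar> * (y \<bullet> (\<Theta> l *v y))"
      by (intro mult_right_mono) auto
    also have "\<dots> \<le> \<bar>real_of_int (t l)\<bar> * (K l * (y \<bullet> y))"
      by (intro mult_left_mono upper) auto
    finally have "real_of_int (t l) * (y \<bullet> (\<Theta> l *v y)) \<le> \<bar>real_of_int (t l)\<bar> * (K l * (y \<bullet> y))" .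
    moreover have "real (k l) * (\<alpha> * (y \<bullet> y)) \<le> real (k l) * (y \<bullet> (\<Theta> l *v y))"
      by (intro mult_left_mono lower) auto
    ultimately show ?thesis by (simp add: algebra_simps)
  qed
  have "y \<bullet> (star_Theta (\<lambda>l. t l - int (k l)) \<Theta> *v y)
      \<le> (\<Sum>l\<in>UNIV. \<bar>real_of_int (t l)\<bar> * K l * (y \<bullet> y) - \<alpha> * real (k l) * (y \<bullet> y))"
    unfolding inner_star_Theta_mult_vec by (intro sum_mono summand)
  also have "\<dots> = ((\<Sum>l\<in>UNIV. \<bar>real_of_int (t l)\<bar> * K l) - \<alpha> * (\<Sum>l\<in>UNIV. real (k l))) * (y \<bullet> y)"
    by (simp add: sum_subtractf sum_distrib_left sum_distrib_right algebra_simps)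
  finally show ?thesis .
qed

lemma norm_mat_exp_star_Theta_le:
  fixes \<Theta> :: "'d::finite \<Rightarrow> real^'n::finite^'n" and t :: "'d \<Rightarrow> int"
  assumes pd: "\<And>l. sym_pos_def_mat (\<Theta> l)"
  obtains \<alpha> C where "\<alpha> > 0" and "\<And>k x. norm (mat_exp (star_Theta (\<lambda>l. t l - int (k l)) \<Theta>) *v x)
      \<le> exp (C - \<alpha> * (\<Sum>l\<in>UNIV. real (k l))) * norm x"
proof -
  obtain c where c: "\<And>l. c l > 0" "\<And>l x. c l * (x \<bullet> x) \<le> x \<bullet> (\<Theta> l *v x)"
    using sym_pos_def_mat_coercive[OF pd] by metis
  have "\<forall>l. \<exists>K. \<forall>x. x \<bullet> (\<Theta> l *v x) \<le> K * (x \<bullet> x)"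
    using quadratic_form_le_norm_sq by blast
  then obtain K where K: "\<And>l x. x \<bullet> (\<Theta> l *v x) \<le> K l * (x \<bullet> x)" by metis
  define \<alpha> where "\<alpha> = Min (range c)"
  have "\<alpha> > 0" unfolding \<alpha>_def using c(1) by (subst Min_gr_iff) auto
  have lower: "\<alpha> * (x \<bullet> x) \<le> x \<bullet> (\<Theta> l *v x)" for l x
  proof -
    have "\<alpha> \<le> c l" unfolding \<alpha>_def by (rule Min_le) auto
    thus ?thesis using c(2)[where l=l and x=x] by (meson inner_ge_zero mult_right_mono order_trans)
  qed
  show thesis
  proof (rule that[OF \<open>\<alpha> > 0\<close> norm_mat_exp_mult_vec_le])
    show "y \<bullet> (star_Theta (\<lambda>l. t l - int (k l)) \<Theta> *v y)
      \<le> ((\<Sum>l\<in>UNIV. \<bar>real_of_int (t l)\<bar> * K l) - \<alpha> * (\<Sum>l\<in>UNIV. real (k l))) * (y \<bullet> y)" for k y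
      using lower K \<open>\<alpha> > 0\<close> by (intro inner_star_Theta_shift_le) auto
  qed
qed

subsection \<open>Iterated limits of box sums of an absolutely summable family\<close>

lemma summable_on_UNIV_prod_nat:
  fixes f :: "'d::finite \<Rightarrow> nat \<Rightarrow> real"
  assumes nonneg: "\<And>l n. f l n \<ge> 0" and summable: "\<And>l. summable (f l)"
  shows "(\<lambda>k::'d\<Rightarrow>nat. \<Prod>l\<in>UNIV. f l (k l)) summable_on UNIV"
proof -
  have "Infinite_Sum.abs_summable_on (f l) UNIV" for l
    using summable nonneg by (simp add: summable_on_UNIV_nonneg_real_iff)
  hence "Infinite_Set_Sum.abs_summable_on (f l) UNIV" for l
    by (simp only: abs_summable_equivalent)
  hence "Infinite_Set_Sum.abs_summable_on (\<lambda>k::'d\<Rightarrow>nat. \<Prod>l\<in>UNIV. f l (k l)) (PiE UNIV (\<lambda>_. UNIV))"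
    by (intro abs_summable_on_prod_PiE) auto
  hence "Infinite_Sum.abs_summable_on (\<lambda>k::'d\<Rightarrow>nat. \<Prod>l\<in>UNIV. f l (k l)) UNIV"
    by (simp only: abs_summable_equivalent PiE_UNIV)
  thus ?thesis
    using nonneg by (simp add: prod_nonneg)
qed

lemma tendsto_infsum_exhausting:
  fixes f :: "'a \<Rightarrow> 'b::banach"
  assumes summable: "f abs_summable_on B" and sub: "\<And>m. C m \<subseteq> B"
    and mono: "\<And>m n. m \<le> n \<Longrightarrow> C m \<subseteq> C n" and exhaust: "\<And>x. x \<in> B \<Longrightarrow> \<exists>m. x \<in> C m"
  shows "(\<lambda>m. infsum f (C m)) \<longlonglongrightarrow> infsum f B"
proof (rule LIMSEQ_I)
  fix e :: real assume "e > 0"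
  define g where "g = (\<lambda>x. norm (f x))"
  have g_B: "g summable_on B" using summable by (simp add: g_def)
  have g_C: "g summable_on C m" for m by (rule summable_on_subset_banach[OF g_B sub])
  have f_B: "f summable_on B" by (rule abs_summable_summable[OF summable])
  have f_C: "f summable_on C m" for m by (rule summable_on_subset_banach[OF f_B sub])
  obtain F where F: "finite F" "F \<subseteq> B" "dist (sum g F) (infsum g B) \<le> e / 2"
    using infsum_finite_approximation[OF g_B, of "e / 2"] \<open>e > 0\<close> by auto
  obtain m\<^sub>0 where "F \<subseteq> C m\<^sub>0"
  proof -
    have "\<forall>x\<in>F. \<exists>m. x \<in> C m" using F(2) exhaust by blast
    then obtain mx where "\<And>x. x \<in> F \<Longrightarrow> x \<in> C (mx x)" by metis
    moreover have "mx x \<le> Max (insert 0 (mx ` F))" if "x \<in> F" for x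
      using F(1) that by (intro Max_ge) auto
    ultimately have "F \<subseteq> C (Max (insert 0 (mx ` F)))"
      using mono by (meson subsetD subsetI)
    thus thesis by (rule that)
  qed
  have "norm (infsum f (C m) - infsum f B) < e" if "m \<ge> m\<^sub>0" for m
  proof -
    have "infsum f B - infsum f (C m) = infsum f (B - C m)"
      by (rule infsum_Diff[symmetric, OF f_B f_C sub])
    hence "norm (infsum f (C m) - infsum f B) = norm (infsum f (B - C m))"
      by (metis norm_minus_commute)
    also have "\<dots> \<le> infsum g (B - C m)"
      unfolding g_def by (rule norm_infsum_bound) (use summable_on_subset_banach[OF g_B] in \<open>auto simp: g_def\<close>)
    also have "\<dots> = infsum g B - infsum g (C m)"
      by (rule infsum_Diff[OF g_B g_C sub])
    also have "\<dots> \<le> infsum g B - sum g F"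
      using \<open>F \<subseteq> C m\<^sub>0\<close> mono[OF that]
      by (simp, intro finite_sum_le_infsum[OF g_C F(1)]) (auto simp: g_def)
    also have "\<dots> < e" using F(3) \<open>e > 0\<close> unfolding dist_real_def by linarith
    finally show ?thesis .
  qed
  thus "\<exists>no. \<forall>n\<ge>no. norm (infsum f (C n) - infsum f B) < e" by blast
qed

text \<open>The summation range once the limits in the coordinates \<open>ds\<close> have been taken.\<close>

definition partial_octant :: "('d \<Rightarrow> int) \<Rightarrow> 'd list \<Rightarrow> ('d \<Rightarrow> nat) \<Rightarrow> ('d \<Rightarrow> int) set" where
  "partial_octant t ds M = {j. (\<forall>l. j l \<le> t l) \<and> (\<forall>l. l \<notin> set ds \<longrightarrow> - int (M l) \<le> j l)}"

lemma iconv_ilim_box_sums: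
  fixes f :: "('d::finite \<Rightarrow> int) \<Rightarrow> 'b::banach" and t :: "'d \<Rightarrow> int"
  assumes summable: "f abs_summable_on {j. \<forall>l. j l \<le> t l}"
    and F: "F = (\<lambda>M. \<Sum>j\<in>{j. \<forall>l. - int (M l) \<le> j l \<and> j l \<le> t l}. f j)"
    and "distinct ds"
  shows "iconv ds F \<and> (\<forall>M. ilim ds F M = infsum f (partial_octant t ds M))"
  using \<open>distinct ds\<close>
proof (induction ds)
  case Nil
  have "ilim [] F M = infsum f (partial_octant t [] M)" for M
  proof -
    have box: "{j. \<forall>l. - int (M l) \<le> j l \<and> j l \<le> t l} = partial_octant t [] M"
      by (auto simp: partial_octant_def)
    have "partial_octant t [] M \<subseteq> PiE UNIV (\<lambda>l. {- int (M l)..t l})"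
      by (auto simp: partial_octant_def)
    hence "finite (partial_octant t [] M)"
      by (rule finite_subset) (intro finite_PiE; simp)
    thus ?thesis by (simp add: F box)
  qed
  thus ?case by simp
next
  case (Cons d ds)
  hence d: "d \<notin> set ds" and IH: "iconv ds F" "\<And>M. ilim ds F M = infsum f (partial_octant t ds M)"
    by auto
  have lim: "(\<lambda>m. ilim ds F (M(d := m))) \<longlonglongrightarrow> infsum f (partial_octant t (d # ds) M)" for M
    unfolding IH(2)
  proof (rule tendsto_infsum_exhausting)
    show "f abs_summable_on partial_octant t (d # ds) M"
      by (rule summable_on_subset_banach[OF summable]) (auto simp: partial_octant_def)
    show "partial_octant t ds (M(d := m)) \<subseteq> partial_octant t (d # ds) M" for m
      using d by (auto simp: partial_octant_def)
    show "partial_octant t ds (M(d := m)) \<subseteq> partial_octant t ds (M(d := n))" if "m \<le> n" for m n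
      using that d by (auto simp: partial_octant_def)
    show "\<exists>m. j \<in> partial_octant t ds (M(d := m))" if "j \<in> partial_octant t (d # ds) M" for j
      using that d by (intro exI[of _ "nat (- j d)"]) (auto simp: partial_octant_def)
  qed
  thus ?case
    using IH(1) limI[OF lim] by (auto simp: convergent_def)
qed

lemma iconv_coords_box_sums:
  fixes f :: "('d::{finite,linorder} \<Rightarrow> int) \<Rightarrow> 'b::banach" and t :: "'d \<Rightarrow> int"
  assumes "f abs_summable_on {j. \<forall>l. j l \<le> t l}"
  shows "iconv coords (\<lambda>M. \<Sum>j\<in>{j. \<forall>l. - int (M l) \<le> j l \<and> j l \<le> t l}. f j)"
  using iconv_ilim_box_sums[OF assms refl, of coords] by (simp add: coords_def)

lemma bij_betw_octant_shift:
  "bij_betw (\<lambda>(k::'d \<Rightarrow> nat) l. t l - int (k l)) UNIV {j. \<forall>l. j l \<le> t l}"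
proof (rule bij_betwI')
  show "\<exists>k\<in>UNIV. j = (\<lambda>l. t l - int (k l))" if "j \<in> {j. \<forall>l. j l \<le> t l}" for j
    using that by (intro bexI[of _ "\<lambda>l. nat (t l - j l)"]) (auto simp: fun_eq_iff)
qed (auto simp: fun_eq_iff)

lemma iconv_box_sum_if_summable_decay:
  fixes \<Theta> :: "'d::{finite,linorder} \<Rightarrow> real^'n::finite^'n" and Z :: "('d \<Rightarrow> int) \<Rightarrow> real^'n"
  assumes decay: "\<And>k x. norm (mat_exp (star_Theta (\<lambda>l. t l - int (k l)) \<Theta>) *v x)
      \<le> exp (C - \<alpha> * (\<Sum>l\<in>UNIV. real (k l))) * norm x"
    and summable: "(\<lambda>k. exp (- \<alpha> * (\<Sum>l\<in>UNIV. real (k l))) * norm (cube_incr Z (\<lambda>l. t l - int (k l))))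
      summable_on UNIV"
  shows "iconv coords (box_sum \<Theta> Z t)"
    and "(\<lambda>j. norm (mat_exp (star_Theta j \<Theta>) *v cube_incr Z j)) summable_on {j. \<forall>l. j l \<le> t l}"
proof -
  define h where "h = (\<lambda>j. norm (mat_exp (star_Theta j \<Theta>) *v cube_incr Z j))"
  have "(\<lambda>k. h (\<lambda>l. t l - int (k l))) summable_on UNIV"
  proof (rule summable_on_comparison_test[OF summable_on_cmult_right[OF summable, of "exp C"]])
    fix k :: "'d \<Rightarrow> nat"
    have "h (\<lambda>l. t l - int (k l))
        \<le> exp (C - \<alpha> * (\<Sum>l\<in>UNIV. real (k l))) * norm (cube_incr Z (\<lambda>l. t l - int (k l)))"
      unfolding h_def by (rule decay)
    thus "h (\<lambda>l. t l - int (k l))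
        \<le> exp C * (exp (- \<alpha> * (\<Sum>l\<in>UNIV. real (k l))) * norm (cube_incr Z (\<lambda>l. t l - int (k l))))"
      by (simp add: exp_diff exp_minus field_simps)
  qed (simp add: h_def)
  thus h_summable: "h summable_on {j. \<forall>l. j l \<le> t l}"
    using summable_on_reindex_bij_betw[OF bij_betw_octant_shift] by blast
  have "iconv coords (\<lambda>M. \<Sum>j\<in>{j. \<forall>l. - int (M l) \<le> j l \<and> j l \<le> t l}.
      mat_exp (star_Theta j \<Theta>) *v cube_incr Z j)"
    by (rule iconv_coords_box_sums) (use h_summable in \<open>simp add: h_def\<close>)
  thus "iconv coords (box_sum \<Theta> Z t)"
    by (simp add: box_sum_def[abs_def])
qed

subsection \<open>Almost sure summability under a logarithmic moment condition\<close>

lemma borel_cantelli_summable_on: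
  fixes A :: "'k::countable \<Rightarrow> 'a set"
  assumes "finite_measure M" and sets: "\<And>k. A k \<in> sets M"
    and summable: "(\<lambda>k. measure M (A k)) summable_on UNIV"
  shows "AE \<omega> in M. finite {k. \<omega> \<in> A k}"
proof -
  interpret finite_measure M by fact
  define B where "B n = (if n \<in> range (to_nat :: 'k \<Rightarrow> nat) then A (from_nat n) else {})" for n
  have B_sets: "B n \<in> sets M" for n by (simp add: B_def sets)
  have "(\<lambda>k. measure M (A k)) = (\<lambda>n. measure M (B n)) \<circ> (to_nat :: 'k \<Rightarrow> nat)"
    by (simp add: B_def fun_eq_iff)
  hence "(\<lambda>n. measure M (B n)) summable_on range (to_nat :: 'k \<Rightarrow> nat)"
    using summable by (subst summable_on_reindex) (auto intro: inj_on_subset[OF inj_to_nat])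
  hence "(\<lambda>n. measure M (B n)) summable_on UNIV"
    by (subst summable_on_cong_neutral[where T="range to_nat" and g="\<lambda>n. measure M (B n)"])
      (auto simp: B_def)
  hence "summable (\<lambda>n. measure M (B n))"
    by (simp add: summable_on_UNIV_nonneg_real_iff)
  hence "AE \<omega> in M. eventually (\<lambda>n. \<omega> \<in> space M - B n) sequentially"
    by (intro borel_cantelli_AE1 B_sets) (auto simp: emeasure_eq_measure)
  thus ?thesis
  proof (rule AE_mp, intro AE_I2 impI)
    fix \<omega> assume "eventually (\<lambda>n. \<omega> \<in> space M - B n) sequentially"
    then obtain N where N: "\<And>n. n \<ge> N \<Longrightarrow> \<omega> \<notin> B n" by (auto simp: eventually_sequentially)
    have "{k. \<omega> \<in> A k} \<subseteq> from_nat ` {..<N}"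
    proof
      fix k assume "k \<in> {k. \<omega> \<in> A k}"
      hence "\<omega> \<in> B (to_nat k)" by (simp add: B_def)
      hence "to_nat k < N" using N not_le by blast
      thus "k \<in> from_nat ` {..<N}" by (metis from_nat_to_nat image_eqI lessThan_iff)
    qed
    thus "finite {k. \<omega> \<in> A k}" by (rule finite_subset) auto
  qed
qed

abbreviation ln_plus_powr :: "real \<Rightarrow> real \<Rightarrow> real" where
  "ln_plus_powr p y \<equiv> (if y > 1 then ln y else 0) powr p"

lemma emeasure_exp_tail_le_log_moment:
  assumes [measurable]: "Y \<in> borel_measurable M" and "a > 0" "p \<ge> 0"
  shows "emeasure M {\<omega>\<in>space M. exp a < Y \<omega>}
    \<le> ennreal (1 / a powr p) * (\<integral>\<^sup>+\<omega>. ennreal (ln_plus_powr p (Y \<omega>)) \<partial>M)"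
proof -
  have "{\<omega>\<in>space M. exp a < Y \<omega>}
      \<subseteq> {\<omega>\<in>space M. 1 \<le> ennreal (1 / a powr p) * ennreal (ln_plus_powr p (Y \<omega>))}"
  proof safe
    fix \<omega> assume "exp a < Y \<omega>"
    moreover have "1 < exp a" using \<open>a > 0\<close> by simp
    ultimately have "1 < Y \<omega>" by linarith
    have "a < ln (Y \<omega>)"
      using \<open>exp a < Y \<omega>\<close> \<open>1 < Y \<omega>\<close> ln_less_cancel_iff[of "exp a" "Y \<omega>"] by simp
    hence "a powr p \<le> ln_plus_powr p (Y \<omega>)"
      using \<open>1 < Y \<omega>\<close> \<open>a > 0\<close> \<open>p \<ge> 0\<close> by (simp add: powr_mono2)
    hence "1 \<le> 1 / a powr p * ln_plus_powr p (Y \<omega>)"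
      using \<open>a > 0\<close> by (simp add: field_simps)
    thus "1 \<le> ennreal (1 / a powr p) * ennreal (ln_plus_powr p (Y \<omega>))"
      by (simp add: ennreal_mult[symmetric] ennreal_leI del: ennreal_1)
  qed
  hence "emeasure M {\<omega>\<in>space M. exp a < Y \<omega>}
      \<le> emeasure M {\<omega>\<in>space M. 1 \<le> ennreal (1 / a powr p) * ennreal (ln_plus_powr p (Y \<omega>))}"
    by (rule emeasure_mono) measurable
  also have "\<dots> \<le> ennreal (1 / a powr p)
      * (\<integral>\<^sup>+\<omega>. ennreal (ln_plus_powr p (Y \<omega>)) * indicator (space M) \<omega> \<partial>M)"
    by (rule nn_integral_Markov_inequality) measurable
  also have "(\<integral>\<^sup>+\<omega>. ennreal (ln_plus_powr p (Y \<omega>)) * indicator (space M) \<omega> \<partial>M)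
      = (\<integral>\<^sup>+\<omega>. ennreal (ln_plus_powr p (Y \<omega>)) \<partial>M)"
    by (intro nn_integral_cong) (simp add: indicator_def)
  finally show ?thesis .
qed

lemma prod_powr_le_sum_powr:
  fixes x :: "'d::finite \<Rightarrow> real"
  assumes "\<And>l. x l \<ge> 1" and "p \<ge> 0"
  shows "(\<Prod>l\<in>UNIV. x l powr (p / CARD('d))) \<le> (\<Sum>l\<in>UNIV. x l) powr p"
proof -
  have "(\<Prod>l\<in>UNIV. x l) \<le> (\<Prod>l\<in>(UNIV::'d set). \<Sum>l'\<in>UNIV. x l')"
    using assms(1) by (intro prod_mono conjI member_le_sum) (auto intro: order_trans[OF zero_le_one])
  hence "(\<Prod>l\<in>UNIV. x l) powr (p / CARD('d)) \<le> ((\<Sum>l\<in>UNIV. x l) ^ CARD('d)) powr (p / CARD('d))"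
    using assms by (intro powr_mono2) (auto intro: prod_nonneg order_trans[OF zero_le_one])
  also have "\<dots> = (\<Sum>l\<in>UNIV. x l) powr p"
  proof -
    have "(\<Sum>l\<in>UNIV. x l) > 0"
      using assms(1) by (intro sum_pos) (auto intro: less_le_trans[OF zero_less_one])
    thus ?thesis by (simp add: powr_realpow[symmetric] powr_powr)
  qed
  finally show ?thesis
    using assms(1) by (simp add: prod_powr_distrib order_trans[OF zero_le_one])
qed

lemma summable_on_prod_powr:
  assumes "q > 1"
  shows "(\<lambda>k::'d::finite\<Rightarrow>nat. \<Prod>l\<in>UNIV. (real (k l) + 1) powr (-q)) summable_on UNIV"
proof (rule summable_on_UNIV_prod_nat)
  have "summable (\<lambda>n. real (Suc n) powr (-q))"
    using assms by (subst summable_Suc_iff) (simp add: summable_real_powr_iff)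
  thus "summable (\<lambda>n. (real n + 1) powr (-q))" by (simp add: add.commute)
qed simp

lemma measure_exp_tail_le_prod_powr:
  fixes k :: "'d::finite \<Rightarrow> nat"
  assumes "finite_measure M" and [measurable]: "Y \<in> borel_measurable M"
    and moment: "(\<integral>\<^sup>+\<omega>. ennreal (ln_plus_powr p (Y \<omega>)) \<partial>M) = ennreal I"
    and "I \<ge> 0" "b > 0" "p \<ge> 0"
  shows "measure M {\<omega>\<in>space M. exp (b * (\<Sum>l\<in>UNIV. real (k l) + 1)) < Y \<omega>}
    \<le> I / b powr p * (\<Prod>l\<in>UNIV. (real (k l) + 1) powr (- (p / CARD('d))))"
proof -
  interpret finite_measure M by fact
  define S where "S = (\<Sum>l\<in>UNIV. real (k l) + 1)"
  have "S > 0" unfolding S_def by (intro sum_pos) auto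
  have "emeasure M {\<omega>\<in>space M. exp (b * S) < Y \<omega>} \<le> ennreal (1 / (b * S) powr p) * ennreal I"
    using emeasure_exp_tail_le_log_moment[of Y M "b * S" p] \<open>b > 0\<close> \<open>S > 0\<close> \<open>p \<ge> 0\<close> moment
    by simp
  also have "\<dots> = ennreal (I / (b * S) powr p)"
    using \<open>I \<ge> 0\<close> by (simp add: ennreal_mult[symmetric])
  finally have "measure M {\<omega>\<in>space M. exp (b * S) < Y \<omega>} \<le> I / (b * S) powr p"
    using \<open>I \<ge> 0\<close> by (simp add: emeasure_eq_measure)
  also have "\<dots> \<le> I / (b powr p * (\<Prod>l\<in>UNIV. (real (k l) + 1) powr (p / CARD('d))))"
  proof (rule divide_left_mono[OF _ \<open>I \<ge> 0\<close>])
    have "(\<Prod>l\<in>UNIV. (real (k l) + 1) powr (p / CARD('d))) \<le> S powr p"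
      unfolding S_def using \<open>p \<ge> 0\<close> by (intro prod_powr_le_sum_powr) auto
    thus "b powr p * (\<Prod>l\<in>UNIV. (real (k l) + 1) powr (p / CARD('d))) \<le> (b * S) powr p"
      using \<open>b > 0\<close> \<open>S > 0\<close> by (simp add: powr_mult)
    show "0 < (b * S) powr p * (b powr p * (\<Prod>l\<in>UNIV. (real (k l) + 1) powr (p / CARD('d))))"
      using \<open>b > 0\<close> \<open>S > 0\<close> by (simp add: prod_pos)
  qed
  also have "\<dots> = I / b powr p * (\<Prod>l\<in>UNIV. (real (k l) + 1) powr (- (p / CARD('d))))"
    by (simp add: powr_minus prod_inversef[symmetric] divide_inverse)
  finally show ?thesis by (simp add: S_def)
qed

lemma AE_finite_exceedances:
  fixes Z :: "('d::finite \<Rightarrow> nat) \<Rightarrow> 'a \<Rightarrow> real" and Y :: "'a \<Rightarrow> real"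
  assumes "prob_space M"
    and [measurable]: "\<And>k. Z k \<in> borel_measurable M" "Y \<in> borel_measurable M"
    and same_law: "\<And>k. distr M borel (Z k) = distr M borel Y"
    and moment: "(\<integral>\<^sup>+\<omega>. ennreal (ln_plus_powr p (Y \<omega>)) \<partial>M) < \<infinity>"
    and "p > CARD('d)" and "b > 0"
  shows "AE \<omega> in M. finite {k. exp (b * (\<Sum>l\<in>UNIV. real (k l) + 1)) < Z k \<omega>}"
proof -
  interpret prob_space M by fact
  define I where "I = enn2real (\<integral>\<^sup>+\<omega>. ennreal (ln_plus_powr p (Y \<omega>)) \<partial>M)"
  have I: "(\<integral>\<^sup>+\<omega>. ennreal (ln_plus_powr p (Y \<omega>)) \<partial>M) = ennreal I" "I \<ge> 0"
    using moment by (auto simp: I_def less_top[symmetric] intro!: ennreal_enn2real[symmetric])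
  define A where "A k = {\<omega>\<in>space M. exp (b * (\<Sum>l\<in>UNIV. real (k l) + 1)) < Z k \<omega>}" for k
  have tail: "measure M (A k) \<le> I / b powr p * (\<Prod>l\<in>UNIV. (real (k l) + 1) powr (- (p / CARD('d))))"
    for k
  proof -
    have "measure M (A k) = measure M {\<omega>\<in>space M. exp (b * (\<Sum>l\<in>UNIV. real (k l) + 1)) < Y \<omega>}"
      using measure_distr[of "Z k" M borel "{exp (b * (\<Sum>l\<in>UNIV. real (k l) + 1))<..}"]
        measure_distr[of Y M borel "{exp (b * (\<Sum>l\<in>UNIV. real (k l) + 1))<..}"]
      by (simp add: same_law A_def vimage_def Int_def conj_commute)
    also have "\<dots> \<le> I / b powr p * (\<Prod>l\<in>UNIV. (real (k l) + 1) powr (- (p / CARD('d))))"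
      using \<open>b > 0\<close> \<open>p > CARD('d)\<close> I
      by (intro measure_exp_tail_le_prod_powr finite_measure_axioms) auto
    finally show ?thesis .
  qed
  have "p / CARD('d) > 1" using \<open>p > CARD('d)\<close> by simp
  hence "(\<lambda>k::'d\<Rightarrow>nat. I / b powr p * (\<Prod>l\<in>UNIV. (real (k l) + 1) powr (- (p / CARD('d)))))
      summable_on UNIV"
    by (intro summable_on_cmult_right summable_on_prod_powr)
  hence "(\<lambda>k. measure M (A k)) summable_on UNIV"
    by (rule summable_on_comparison_test) (use tail in auto)
  hence "AE \<omega> in M. finite {k. \<omega> \<in> A k}"
    by (intro borel_cantelli_summable_on) (auto simp: A_def finite_measure_axioms)
  thus ?thesis
    by (rule AE_mp) (auto simp: A_def)
qed

lemma summable_on_exp_decay_mult: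
  fixes z :: "('d::finite \<Rightarrow> nat) \<Rightarrow> real"
  assumes nonneg: "\<And>k. z k \<ge> 0" and "0 < b" "b < a"
    and finite: "finite {k. exp (b * (\<Sum>l\<in>UNIV. real (k l) + 1)) < z k}"
  shows "(\<lambda>k. exp (- a * (\<Sum>l\<in>UNIV. real (k l))) * z k) summable_on UNIV"
proof -
  define F where "F = {k. exp (b * (\<Sum>l\<in>UNIV. real (k l) + 1)) < z k}"
  define g where "g k = exp (b * CARD('d)) * (\<Prod>l\<in>UNIV. exp (b - a) ^ k l)" for k :: "'d \<Rightarrow> nat"
  have "g summable_on UNIV"
    unfolding g_def using \<open>b < a\<close>
    by (intro summable_on_cmult_right summable_on_UNIV_prod_nat) (auto intro!: summable_geometric)
  hence "(\<lambda>k. exp (- a * (\<Sum>l\<in>UNIV. real (k l))) * z k) summable_on (UNIV - F)"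
  proof (rule summable_on_comparison_test[OF summable_on_subset_banach])
    fix k assume "k \<in> UNIV - F"
    hence "z k \<le> exp (b * (\<Sum>l\<in>UNIV. real (k l) + 1))" by (auto simp: F_def)
    hence "exp (- a * (\<Sum>l\<in>UNIV. real (k l))) * z k
        \<le> exp (- a * (\<Sum>l\<in>UNIV. real (k l))) * exp (b * (\<Sum>l\<in>UNIV. real (k l) + 1))"
      by (intro mult_left_mono) auto
    also have "\<dots> = exp (b * CARD('d)) * exp ((b - a) * (\<Sum>l\<in>UNIV. real (k l)))"
      by (simp add: mult_exp_exp sum.distrib algebra_simps)
    also have "\<dots> = g k"
      by (simp add: g_def exp_of_nat_mult[symmetric] exp_sum sum_distrib_left algebra_simps)
    finally show "exp (- a * (\<Sum>l\<in>UNIV. real (k l))) * z k \<le> g k" .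
  qed (use nonneg in auto)
  moreover have "(\<lambda>k. exp (- a * (\<Sum>l\<in>UNIV. real (k l))) * z k) summable_on F"
    using finite by (simp add: F_def)
  ultimately show ?thesis
    using summable_on_Un_disjoint[of _ "UNIV - F" F] by fastforce
qed

subsection \<open>Stationary increment fields\<close>

lemma measurable_cube_incr [measurable]:
  fixes G :: "('d::finite \<Rightarrow> int) \<Rightarrow> 'a \<Rightarrow> real^'n"
  assumes "\<And>t. G t \<in> borel_measurable M"
  shows "(\<lambda>\<omega>. cube_incr (\<lambda>u. G u \<omega>) t) \<in> borel_measurable M"
  unfolding cube_incr_def
  by (rule borel_measurable_sum, rule borel_measurable_scaleR) (simp_all add: assms)

lemma distr_cube_incr_eq:
  fixes G :: "('d::finite \<Rightarrow> int) \<Rightarrow> 'a \<Rightarrow> real^'n"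
  assumes [measurable]: "\<And>t. G t \<in> borel_measurable M" and "stationary_increment M G"
  shows "distr M borel (\<lambda>\<omega>. cube_incr (\<lambda>u. G u \<omega>) j)
       = distr M borel (\<lambda>\<omega>. cube_incr (\<lambda>u. G u \<omega>) (\<lambda>_. 1))"
proof -
  define one :: "'d \<Rightarrow> int" where "one = (\<lambda>_. 1)"
  define N where "N = PiM {one} (\<lambda>_. borel :: (real^'n) measure)"
  define X where "X = (\<lambda>t \<omega>. cube_incr (\<lambda>u. G u \<omega>) t)"
  define f where "f s \<omega> = (\<lambda>t\<in>{one}. X (\<lambda>l. t l + s l) \<omega>)" for s \<omega>
  have [measurable]: "f s \<in> measurable M N" for s
    unfolding N_def f_def X_def by (intro measurable_restrict) simp
  have [measurable]: "(\<lambda>g. g one) \<in> measurable N borel"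
    unfolding N_def by (rule measurable_component_singleton) simp
  have law: "distr M borel (X (\<lambda>l. one l + s l)) = distr (distr M N (f s)) borel (\<lambda>g. g one)" for s
    by (subst distr_distr) (auto intro!: distr_cong simp: f_def)
  have "distr M N (f (\<lambda>l. j l - 1)) = distr M N (f (\<lambda>_. 0))"
    using assms(2) unfolding stationary_increment_def N_def f_def X_def by simp
  hence "distr M borel (X (\<lambda>l. one l + (j l - 1))) = distr M borel (X (\<lambda>l. one l + 0))"
    by (simp only: law)
  thus ?thesis by (simp add: X_def one_def)
qed

lemma as_conclusion_if_log_moment_increment:
  fixes M :: "'a measure" and G :: "('d::{finite,linorder} \<Rightarrow> int) \<Rightarrow> 'a \<Rightarrow> real^'n"
  assumes "prob_space M" and [measurable]: "\<And>t. G t \<in> borel_measurable M"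
    and "stationary_increment M G"
    and "\<delta> > 0" and moment: "log_moment M (\<lambda>\<omega>. cube_incr (\<lambda>u. G u \<omega>) (\<lambda>_. 1)) (real CARD('d)) \<delta>"
  shows "as_conclusion M G"
  unfolding as_conclusion_def
proof (intro allI impI)
  fix \<Theta> :: "'d \<Rightarrow> real^'n^'n" and t :: "'d \<Rightarrow> int"
  assume "admissible_Theta \<Theta>"
  hence pd: "\<And>l. sym_pos_def_mat (\<Theta> l)" by (simp add: admissible_Theta_def)
  obtain \<alpha> C where "\<alpha> > 0" and decay: "\<And>k x. norm (mat_exp (star_Theta (\<lambda>l. t l - int (k l)) \<Theta>) *v x)
      \<le> exp (C - \<alpha> * (\<Sum>l\<in>UNIV. real (k l))) * norm x"
    using norm_mat_exp_star_Theta_le[of \<Theta> t, OF pd] by blast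
  define X where "X = (\<lambda>j \<omega>. cube_incr (\<lambda>u. G u \<omega>) j)"
  have same_law: "distr M borel (\<lambda>\<omega>. norm (X j \<omega>)) = distr M borel (\<lambda>\<omega>. norm (X (\<lambda>_. 1) \<omega>))" for j
    using distr_distr[of norm borel borel "X j" M] distr_distr[of norm borel borel "X (\<lambda>_. 1)" M]
      distr_cube_incr_eq[OF assms(2,3), of j]
    by (simp add: X_def comp_def)
  have "AE \<omega> in M. finite {k. exp (\<alpha> / 2 * (\<Sum>l\<in>UNIV. real (k l) + 1)) < norm (X (\<lambda>l. t l - int (k l)) \<omega>)}"
  proof (rule AE_finite_exceedances[OF \<open>prob_space M\<close> _ _ same_law])
    show "(\<integral>\<^sup>+\<omega>. ennreal (ln_plus_powr (CARD('d) + \<delta>) (norm (X (\<lambda>_. 1) \<omega>))) \<partial>M) < \<infinity>"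
      using moment unfolding X_def log_moment_def by simp
  qed (use \<open>\<delta> > 0\<close> \<open>\<alpha> > 0\<close> in \<open>auto simp: X_def\<close>)
  thus "AE \<omega> in M. iconv coords (box_sum \<Theta> (\<lambda>u. G u \<omega>) t)
      \<and> (\<lambda>j. norm (mat_exp (star_Theta j \<Theta>) *v cube_incr (\<lambda>u. G u \<omega>) j)) summable_on {j. \<forall>l. j l \<le> t l}"
  proof (rule AE_mp, intro AE_I2 impI)
    fix \<omega> assume "finite {k. exp (\<alpha> / 2 * (\<Sum>l\<in>UNIV. real (k l) + 1)) < norm (X (\<lambda>l. t l - int (k l)) \<omega>)}"
    hence "(\<lambda>k. exp (- \<alpha> * (\<Sum>l\<in>UNIV. real (k l))) * norm (X (\<lambda>l. t l - int (k l)) \<omega>)) summable_on UNIV"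
      using \<open>\<alpha> > 0\<close> by (intro summable_on_exp_decay_mult[where b="\<alpha> / 2"]) auto
    thus "iconv coords (box_sum \<Theta> (\<lambda>u. G u \<omega>) t)
      \<and> (\<lambda>j. norm (mat_exp (star_Theta j \<Theta>) *v cube_incr (\<lambda>u. G u \<omega>) j)) summable_on {j. \<forall>l. j l \<le> t l}"
      using iconv_box_sum_if_summable_decay[OF decay] by (simp add: X_def)
  qed
qed

lemma AE_cube_incr_one_eq:
  fixes G :: "('d::finite \<Rightarrow> int) \<Rightarrow> 'a \<Rightarrow> real^'n"
  assumes vanish: "\<forall>t. (\<exists>l. t l = 0) \<longrightarrow> (AE \<omega> in M. G t \<omega> = 0)"
  shows "AE \<omega> in M. cube_incr (\<lambda>u. G u \<omega>) (\<lambda>_. 1) = G (\<lambda>_. 1) \<omega>"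
proof -
  define corner where "corner S = (\<lambda>l::'d. (1::int) - (if l \<in> S then 1 else 0))" for S
  have "AE \<omega> in M. \<forall>S\<in>Pow UNIV - {{}}. G (corner S) \<omega> = 0"
  proof (rule AE_finite_allI)
    fix S :: "'d set" assume "S \<in> Pow UNIV - {{}}"
    then obtain l where "l \<in> S" by auto
    hence "corner S l = 0" by (simp add: corner_def)
    thus "AE \<omega> in M. G (corner S) \<omega> = 0" using vanish by blast
  qed simp
  thus ?thesis
  proof (rule AE_mp, intro AE_I2 impI)
    fix \<omega> assume zero: "\<forall>S\<in>Pow UNIV - {{}}. G (corner S) \<omega> = 0"
    have "cube_incr (\<lambda>u. G u \<omega>) (\<lambda>_. 1) = (\<Sum>S\<in>Pow UNIV. ((-1::real) ^ card S) *\<^sub>R G (corner S) \<omega>)"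
      by (simp add: cube_incr_def corner_def)
    also have "\<dots> = G (corner {}) \<omega> + (\<Sum>S\<in>Pow UNIV - {{}}. ((-1::real) ^ card S) *\<^sub>R G (corner S) \<omega>)"
      by (subst sum.remove[of _ "{}"]) auto
    also have "\<dots> = G (\<lambda>_. 1) \<omega>"
      using zero by (simp add: corner_def)
    finally show "cube_incr (\<lambda>u. G u \<omega>) (\<lambda>_. 1) = G (\<lambda>_. 1) \<omega>" .
  qed
qed

lemma log_moment_AE_cong:
  assumes "AE \<omega> in M. X \<omega> = Y \<omega>"
  shows "log_moment M X p \<delta> \<longleftrightarrow> log_moment M Y p \<delta>"
proof -
  have "AE \<omega> in M. ennreal ((if norm (X \<omega>) > 1 then ln (norm (X \<omega>)) else 0) powr (p + \<delta>))
      = ennreal ((if norm (Y \<omega>) > 1 then ln (norm (Y \<omega>)) else 0) powr (p + \<delta>))"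
    using assms by (rule AE_mp) simp
  thus ?thesis
    unfolding log_moment_def by (simp only: nn_integral_cong_AE)
qed

theorem mainTheorem3:
  fixes M :: "'a measure" and G :: "('d::{finite,linorder} \<Rightarrow> int) \<Rightarrow> 'a \<Rightarrow> real^'n"
  assumes "prob_space M"
    and "\<And>t. G t \<in> borel_measurable M"
    and "stationary_increment M G"
  shows "((\<exists>\<delta>>0. log_moment M (\<lambda>\<omega>. cube_incr (\<lambda>u. G u \<omega>) (\<lambda>_. 1)) (real CARD('d)) \<delta>)
            \<longrightarrow> as_conclusion M G)
       \<and> (((\<forall>t. (\<exists>l. t l = 0) \<longrightarrow> (AE \<omega> in M. G t \<omega> = 0))
            \<and> (\<exists>\<delta>>0. log_moment M (G (\<lambda>_. 1)) (real CARD('d)) \<delta>))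
            \<longrightarrow> as_conclusion M G)"
proof (intro conjI impI)
  assume "\<exists>\<delta>>0. log_moment M (\<lambda>\<omega>. cube_incr (\<lambda>u. G u \<omega>) (\<lambda>_. 1)) (real CARD('d)) \<delta>"
  thus "as_conclusion M G"
    using as_conclusion_if_log_moment_increment[OF assms] by blast
next
  assume "(\<forall>t. (\<exists>l. t l = 0) \<longrightarrow> (AE \<omega> in M. G t \<omega> = 0))
    \<and> (\<exists>\<delta>>0. log_moment M (G (\<lambda>_. 1)) (real CARD('d)) \<delta>)"
  then obtain \<delta> where "\<delta> > 0" and "log_moment M (G (\<lambda>_. 1)) (real CARD('d)) \<delta>"
    and "AE \<omega> in M. cube_incr (\<lambda>u. G u \<omega>) (\<lambda>_. 1) = G (\<lambda>_. 1) \<omega>"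
    using AE_cube_incr_one_eq by blast
  thus "as_conclusion M G"
    by (intro as_conclusion_if_log_moment_increment[OF assms]) (simp_all add: log_moment_AE_cong)
qed

end
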